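(* Let $K$ be a semifield. Let $P$ be a polygon with vertex set $V$ and a non-empty dissection $D$, and let $d=\{\zeta,\eta\}\in D$ be such that $D = \{d\}\cup D_2$ where $D_2$ is a dissection of the subpolygon $P_2$ with vertex set $V_2 = \{\varepsilon \in V : \eta \le \varepsilon \le \zeta\}$. If $f : \operatorname{diag}(P) \to K$ satisfies the $T$-path formula with respect to $D$, then $f|_{\operatorname{diag}(P_2)}$ satisfies the $T$-path formula with respect to $D_2$.
   Context: A semifield is a set $K$ with binary operations $+,\cdot$ such that $+$ is associative and commutative, $(K,\cdot)$ is a commutative group, and $\cdot$ distributes over $+$. A polygon is a finite set of at least three vertices with a cyclic order, pictured as a convex polygon in the plane with vertices anticlockwise. "$a\le\varepsilon\le b$" means $\varepsilon$ lies on the cyclic interval from $a$ to $b$ in the positive direction, endpoints included. A subpolygon is a subset of at least three vertices with induced cyclic order. A diagonal is a two-element subset of the vertex set (edges included); $\operatorname{diag}(Q)$ denotes the set of diagonals of $Q$; non-edges are internal. Diagonals cross if they consist of four distinct vertices $\alpha,\beta,\gamma,\delta$ appearing cyclically as $\alpha,\gamma,\beta,\delta$ or $\alpha,\delta,\beta,\gamma$. A dissection is a set of pairwise non-crossing internal diagonals. For a dissection $D$ of a polygon $Q$ and vertices $\pi_1\neq\pi_p$, a $T$-path from $\pi_1$ to $\pi_p$ is a tuple $(\pi_1,\dots,\pi_p)$ of vertices of $Q$ with: (i) $\{\pi_1,\pi_2\},\dots,\{\pi_{p-1},\pi_p\}$ pairwise different diagonals; (ii) no $\{\pi_i,\pi_{i+1}\}$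 crosses a diagonal of $D$; (iii) each $\{\pi_{2j},\pi_{2j+1}\}$ lies in $D$, and these cross the segment $\{\pi_1,\pi_p\}$ at pairwise different points progressing monotonically from $\pi_1$ to $\pi_p$. $\mathcal{T}_{Q,D}(\alpha,\beta)$ is the set of these. With $f(\alpha,\beta):=f(\{\alpha,\beta\})$, $f(\pi) := \prod_{i\text{ odd}} f(\pi_i,\pi_{i+1}) / \prod_{j\text{ even}} f(\pi_j,\pi_{j+1})$. A map $f:\operatorname{diag}(Q)\to K$ satisfies the $T$-path formula with respect to $D$ if $f(\alpha,\beta) = \sum_{\pi\in\mathcal{T}_{Q,D}(\alpha,\beta)} f(\pi)$ for all vertices $\alpha\neq\beta$ of $Q$. *)

theory Defs
  imports Main
begin

class semifield = ab_semigroup_add + comm_monoid_mult + inverse +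
  assumes sf_left_inverse: "inverse a * a = 1"
  and sf_distrib: "(a + b) * c = a * c + b * c"

text \<open>Sum over a finite nonempty set in an additive semigroup (no zero):
  sum_rel g A s means s is the sum of g over A.\<close>
inductive sum_rel :: "('b \<Rightarrow> 'k::ab_semigroup_add) \<Rightarrow> 'b set \<Rightarrow> 'k \<Rightarrow> bool"
  for g where
  single: "sum_rel g {x} (g x)"
| insert: "sum_rel g A s \<Longrightarrow> x \<notin> A \<Longrightarrow> sum_rel g (insert x A) (g x + s)"

text \<open>Vertices live in a linearly ordered type; the cyclic order is the one
  induced by the linear order (wrapping around).  cbetween a e b: e lies on the
  closed cyclic interval from a to b in the positive direction.\<close>
definition cbetween :: "'a::linorder \<Rightarrow> 'a \<Rightarrow> 'a \<Rightarrow> bool" where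
  "cbetween a e b \<longleftrightarrow> (if a \<le> b then a \<le> e \<and> e \<le> b else a \<le> e \<or> e \<le> b)"

definition scbetween :: "'a::linorder \<Rightarrow> 'a \<Rightarrow> 'a \<Rightarrow> bool" where
  "scbetween a e b \<longleftrightarrow> cbetween a e b \<and> e \<noteq> a \<and> e \<noteq> b"

definition polygon :: "'a::linorder set \<Rightarrow> bool" where
  "polygon Q \<longleftrightarrow> finite Q \<and> card Q \<ge> 3"

definition diags :: "'a set \<Rightarrow> 'a set set" where
  "diags Q = {{a, b} | a b. a \<in> Q \<and> b \<in> Q \<and> a \<noteq> b}"

definition is_edge :: "'a::linorder set \<Rightarrow> 'a set \<Rightarrow> bool" where
  "is_edge Q d \<longleftrightarrow> (\<exists>a b. d = {a, b} \<and> a \<noteq> b \<and> (\<forall>x\<in>Q. \<not> scbetween a x b))"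

definition internal :: "'a::linorder set \<Rightarrow> 'a set \<Rightarrow> bool" where
  "internal Q d \<longleftrightarrow> d \<in> diags Q \<and> \<not> is_edge Q d"

definition crosses :: "'a::linorder set \<Rightarrow> 'a set \<Rightarrow> bool" where
  "crosses d1 d2 \<longleftrightarrow> (\<exists>a b c e. d1 = {a, b} \<and> d2 = {c, e} \<and> distinct [a, b, c, e]
      \<and> cbetween a c b \<and> cbetween b e a)"

definition dissection :: "'a::linorder set \<Rightarrow> 'a set set \<Rightarrow> bool" where
  "dissection Q D \<longleftrightarrow> D \<subseteq> {d. internal Q d} \<and> (\<forall>d1\<in>D. \<forall>d2\<in>D. \<not> crosses d1 d2)"

text \<open>cross_before a b d1 d2: d1 and d2 both (are assumed to) cross the segment {a,b},
  and d1 crosses it at a point strictly closer to a than d2 does.  For non-crossing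
  diagonals this means: d1 = {x1,y1} with x1 on the side (a,b), y1 on the side (b,a),
  and d2 lies (weakly) on the side of d1 containing b, d2 \<noteq> d1.\<close>
definition cross_before :: "'a::linorder \<Rightarrow> 'a \<Rightarrow> 'a set \<Rightarrow> 'a set \<Rightarrow> bool" where
  "cross_before a b d1 d2 \<longleftrightarrow> d1 \<noteq> d2 \<and>
     (\<exists>x1 y1. d1 = {x1, y1} \<and> scbetween a x1 b \<and> scbetween b y1 a
        \<and> (\<forall>z\<in>d2. cbetween x1 z y1))"

text \<open>T-paths as lists pi = [pi_1, ..., pi_p]; list index k (0-based) of a step
  corresponds to step i = k+1, so the even steps i = 2j are the odd k.\<close>
definition step :: "'a list \<Rightarrow> nat \<Rightarrow> 'a set" where
  "step p k = {p ! k, p ! (k + 1)}"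

definition is_tpath :: "'a::linorder set \<Rightarrow> 'a set set \<Rightarrow> 'a \<Rightarrow> 'a \<Rightarrow> 'a list \<Rightarrow> bool" where
  "is_tpath Q D \<alpha> \<beta> p \<longleftrightarrow>
     length p \<ge> 2 \<and> hd p = \<alpha> \<and> last p = \<beta> \<and> \<alpha> \<noteq> \<beta> \<and> set p \<subseteq> Q \<and>
     (\<forall>k < length p - 1. p ! k \<noteq> p ! (k + 1)) \<and>
     distinct (map (step p) [0..<length p - 1]) \<and>
     (\<forall>k < length p - 1. \<forall>d\<in>D. \<not> crosses (step p k) d) \<and>
     (\<forall>k < length p - 1. odd k \<longrightarrow> step p k \<in> D \<and> crosses (step p k) {\<alpha>, \<beta>}) \<and>
     (\<forall>k1 k2. k1 < k2 \<and> k2 < length p - 1 \<and> odd k1 \<and> odd k2 \<longrightarrow>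
        cross_before \<alpha> \<beta> (step p k1) (step p k2))"

definition tpaths :: "'a::linorder set \<Rightarrow> 'a set set \<Rightarrow> 'a \<Rightarrow> 'a \<Rightarrow> 'a list set" where
  "tpaths Q D \<alpha> \<beta> = {p. is_tpath Q D \<alpha> \<beta> p}"

definition tweight :: "('a set \<Rightarrow> 'k::semifield) \<Rightarrow> 'a list \<Rightarrow> 'k" where
  "tweight f p = (\<Prod>k\<in>{k. k < length p - 1 \<and> even k}. f (step p k))
      * inverse (\<Prod>k\<in>{k. k < length p - 1 \<and> odd k}. f (step p k))"

definition tpath_formula :: "'a::linorder set \<Rightarrow> 'a set set \<Rightarrow> ('a set \<Rightarrow> 'k::semifield) \<Rightarrow> bool" where
  "tpath_formula Q D f \<longleftrightarrow>
     (\<forall>\<alpha>\<in>Q. \<forall>\<beta>\<in>Q. \<alpha> \<noteq> \<beta> \<longrightarrow> sum_rel (tweight f) (tpaths Q D \<alpha> \<beta>) (f {\<alpha>, \<beta>}))"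

end

theory Submission
  imports Defs
begin

text \<open>No chord with both endpoints on the closed arc from \<open>\<eta>\<close> to \<open>\<zeta>\<close> crosses \<open>{\<zeta>, \<eta>}\<close>.
  Hence, for \<open>\<alpha>, \<beta>\<close> on that arc, the only diagonals of \<open>D\<close> that can cross \<open>{\<alpha>, \<beta>}\<close> lie
  in \<open>D\<^sub>2\<close>, so every \<open>T\<close>-path from \<open>\<alpha>\<close> to \<open>\<beta>\<close> for \<open>(P, D)\<close> uses only vertices of \<open>P\<^sub>2\<close>,
  and conversely the steps of a \<open>T\<close>-path in \<open>P\<^sub>2\<close> never cross \<open>{\<zeta>, \<eta>}\<close>.  The two sets of
  \<open>T\<close>-paths therefore coincide, and so do the two \<open>T\<close>-path formulas.\<close>

lemma cbetween_rotate:
  assumes "distinct [a, b, c, e]" "cbetween a c b" "cbetween b e a"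
  shows "cbetween c b e" "cbetween e a c"
  using assms unfolding cbetween_def by (auto split: if_splits)

lemma crosses_commute: "crosses d1 d2 \<longleftrightarrow> crosses d2 d1"
proof -
  have "crosses d2 d1" if cr: "crosses d1 d2" for d1 d2 :: "'a set"
  proof -
    obtain a b c e where d: "d1 = {a, b}" "d2 = {c, e}"
      and abce: "distinct [a, b, c, e]" "cbetween a c b" "cbetween b e a"
      using cr unfolding crosses_def by blast
    have "d1 = {b, a}" "distinct [c, e, b, a]"
      using d abce by (auto simp: insert_commute)
    moreover have "cbetween c b e" "cbetween e a c"
      using cbetween_rotate abce by blast+
    ultimately show ?thesis
      unfolding crosses_def using d by blast
  qed
  then show ?thesis by blast
qed

lemma not_crosses_arc_chord:
  assumes "cbetween \<eta> x \<zeta>" "cbetween \<eta> y \<zeta>"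
  shows "\<not> crosses {x, y} {\<zeta>, \<eta>}"
  using assms unfolding crosses_def
  by (auto simp: cbetween_def doubleton_eq_iff split: if_splits)
lemma dissection_diag_subset: "dissection Q D \<Longrightarrow> d \<in> D \<Longrightarrow> d \<subseteq> Q"
  unfolding dissection_def internal_def diags_def by blast

lemma tpath_vertex_cases:
  assumes "is_tpath Q D \<alpha> \<beta> p" "x \<in> set p"
  shows "x = \<alpha> \<or> x = \<beta> \<or> (\<exists>k < length p - 1. odd k \<and> x \<in> step p k)"
proof -
  obtain j where j: "j < length p" "p ! j = x"
    using assms(2) by (auto simp: in_set_conv_nth)
  have p: "length p \<ge> 2" "hd p = \<alpha>" "last p = \<beta>"
    using assms(1) unfolding is_tpath_def by auto
  consider "j = 0" | "j = length p - 1" | "0 < j" "j < length p - 1" "odd j"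
    | "0 < j" "j < length p - 1" "even j"
    using j(1) by linarith
  then show ?thesis
  proof cases
    case 1
    then show ?thesis using j p by (simp add: hd_conv_nth)
  next
    case 2
    then show ?thesis using j p by (metis last_conv_nth list.size(3) not_less0)
  next
    case 3
    then show ?thesis using j by (auto simp: step_def)
  next
    case 4
    then have "odd (j - 1)" "j - 1 < length p - 1" "x \<in> step p (j - 1)"
      using j by (auto simp: step_def)
    then show ?thesis by blast
  qed
qed

lemma is_tpath_subpolygon_iff:
  assumes "Q2 \<subseteq> Q" "D2 \<subseteq> D" and D2_in_Q2: "\<And>d. d \<in> D2 \<Longrightarrow> d \<subseteq> Q2"
    and no_cross: "\<And>d x y. d \<in> D - D2 \<Longrightarrow> x \<in> Q2 \<Longrightarrow> y \<in> Q2 \<Longrightarrow> \<not> crosses {x, y} d"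
    and ends: "\<alpha> \<in> Q2" "\<beta> \<in> Q2"
  shows "is_tpath Q D \<alpha> \<beta> p \<longleftrightarrow> is_tpath Q2 D2 \<alpha> \<beta> p"
proof
  assume tp: "is_tpath Q D \<alpha> \<beta> p"
  have odd_steps: "step p k \<in> D2" if "k < length p - 1" "odd k" for k
  proof -
    have "step p k \<in> D" "crosses {\<alpha>, \<beta>} (step p k)"
      using tp that crosses_commute unfolding is_tpath_def by blast+
    then show ?thesis using no_cross ends by blast
  qed
  have "set p \<subseteq> Q2"
  proof
    fix x assume "x \<in> set p"
    from tpath_vertex_cases[OF tp this] show "x \<in> Q2"
      using odd_steps D2_in_Q2 ends by (auto simp: step_def)
  qed
  moreover have "\<forall>k < length p - 1. \<forall>d\<in>D2. \<not> crosses (step p k) d"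
    using tp \<open>D2 \<subseteq> D\<close> unfolding is_tpath_def by blast
  moreover have "\<forall>k < length p - 1. odd k \<longrightarrow> step p k \<in> D2 \<and> crosses (step p k) {\<alpha>, \<beta>}"
    using tp odd_steps unfolding is_tpath_def by blast
  ultimately show "is_tpath Q2 D2 \<alpha> \<beta> p"
    using tp unfolding is_tpath_def by (elim conjE, intro conjI) assumption+
next
  assume tp: "is_tpath Q2 D2 \<alpha> \<beta> p"
  then have "set p \<subseteq> Q2"
    unfolding is_tpath_def by blast
  have "\<not> crosses (step p k) d" if "k < length p - 1" "d \<in> D - D2" for k d
  proof -
    have "p ! k \<in> Q2" "p ! (k + 1) \<in> Q2"
      using \<open>set p \<subseteq> Q2\<close> that(1) by auto
    then show ?thesis
      using no_cross that(2) unfolding step_def by blast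
  qed
  then have "\<forall>k < length p - 1. \<forall>d\<in>D. \<not> crosses (step p k) d"
    using tp unfolding is_tpath_def by blast
  moreover have "\<forall>k < length p - 1. odd k \<longrightarrow> step p k \<in> D \<and> crosses (step p k) {\<alpha>, \<beta>}"
    using tp \<open>D2 \<subseteq> D\<close> unfolding is_tpath_def by blast
  moreover have "set p \<subseteq> Q"
    using \<open>set p \<subseteq> Q2\<close> \<open>Q2 \<subseteq> Q\<close> by blast
  ultimately show "is_tpath Q D \<alpha> \<beta> p"
    using tp unfolding is_tpath_def by (elim conjE, intro conjI) assumption+
qed

theorem lemma3p5:
  fixes V :: "'a::linorder set" and D D2 :: "'a set set" and f :: "'a set \<Rightarrow> 'k::semifield"
    and \<zeta> \<eta> :: 'a
  assumes "polygon V"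
    and "dissection V D"
    and "D \<noteq> {}"
    and "{\<zeta>, \<eta>} \<in> D"
    and "D = {{\<zeta>, \<eta>}} \<union> D2"
    and "polygon {\<epsilon> \<in> V. cbetween \<eta> \<epsilon> \<zeta>}"
    and "dissection {\<epsilon> \<in> V. cbetween \<eta> \<epsilon> \<zeta>} D2"
    and "tpath_formula V D f"
  shows "tpath_formula {\<epsilon> \<in> V. cbetween \<eta> \<epsilon> \<zeta>} D2 f"
proof -
  let ?V2 = "{\<epsilon> \<in> V. cbetween \<eta> \<epsilon> \<zeta>}"
  have same_tpaths: "tpaths V D \<alpha> \<beta> = tpaths ?V2 D2 \<alpha> \<beta>" if "\<alpha> \<in> ?V2" "\<beta> \<in> ?V2" for \<alpha> \<beta>
    unfolding tpaths_def
  proof (intro Collect_cong is_tpath_subpolygon_iff)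
    show "\<And>d. d \<in> D2 \<Longrightarrow> d \<subseteq> ?V2"
      using assms(7) by (rule dissection_diag_subset)
    show "\<And>d x y. d \<in> D - D2 \<Longrightarrow> x \<in> ?V2 \<Longrightarrow> y \<in> ?V2 \<Longrightarrow> \<not> crosses {x, y} d"
      using assms(5) not_crosses_arc_chord by blast
  qed (use that assms(5) in auto)
  show ?thesis
    using assms(8) unfolding tpath_formula_def by (simp add: same_tpaths[symmetric])
qed

end
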